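(* Suppose the Lipschitz assumption holds, and let $K^3_t>0$ be a constant with $\|\hat f_t(z_1,\gamma)-\hat f_t(z_2,\gamma)\|_\infty\le K^3_t\|z_1-z_2\|_\infty$ for all $\gamma\in\mathcal G$, $z_1,z_2\in\mathcal I(\mathcal X)$. Let $t\in\mathbb N_T$, $\gamma_t\in\mathcal G$, let $m_t\in\mathcal M_n$ be the empirical distribution of the agents' states at time $t$, and $z_t\in\Delta(\mathcal X)$. Suppose every agent uses $u^i_t=\gamma_t(x^i_t)$, let $m_{t+1}$ be the resulting empirical distribution at time $t+1$, and let $z_{t+1}=\hat f_t(z_t,\gamma_t)$. Then $$\mathbb E\big[\|m_{t+1}-z_{t+1}\|_\infty\big]\le K^3_t\|m_t-z_t\|_\infty+\mathcal O(1/\sqrt n).$$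
   Context: Fix $n\in\mathbb N$ agents, $T\in\mathbb N$, finite sets $\mathcal X,\mathcal U,\mathcal W$; $\mathbb N_k=\{1,\dots,k\}$; $\mathcal I(\mathcal X)=[0,1]^{\mathcal X}$; $\Delta(\mathcal X)$ the probability vectors on $\mathcal X$; $\mathcal M_n=\{m\in\Delta(\mathcal X):m(x)\in\{0,\tfrac1n,\dots,1\}\}$. Agent $i$ has state $x^i_t$ and action $u^i_t$; mean-field $m_t(x)=\frac1n\sum_i\mathbb 1(x^i_t=x)$; dynamics $x^i_{t+1}=f_t(x^i_t,u^i_t,w^i_t,m_t)$ with $f_t:\mathcal X\times\mathcal U\times\mathcal W\times\mathcal I(\mathcal X)\to\mathcal X$, where $w^1_t,\dots,w^n_t$ are i.i.d. with law $\mathbb P(w_t=\cdot)$ and independent of the states at time $t$. $\mathbb P(y|x,u,z)=\sum_w\mathbb 1(f_t(x,u,w,z)=y)\mathbb P(w_t=w)$; costs $\ell_t:\mathcal X\times\mathcal U\times\mathcal I(\mathcal X)\to\mathbb R_{\ge0}$. Lipschitz assumption: constants $K^1_t,K^2_t>0$ with $|\mathbb P(y|x,u,z_1)-\mathbb P(y|x,u,z_2)|\le K^1_t\|z_1-z_2\|_\infty$, $|\ell_t(x,u,z_1)-\ell_t(x,u,z_2)|\le K^2_t\|z_1-z_2\|_\infty$ for all $x,y,u$, $z_1,z_2\in\mathcal I(\mathcal X)$. $\mathcal G$ is the set of maps $\gamma:\mathcal X\to\mathcal U$; $\hat f_t(z,\gamma)(y)=\sum_x z(x)\mathbb P(y|x,\gamma(x),z)$.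 Model data do not depend on $n$; $\mathcal O(1/\sqrt n)$ denotes a quantity bounded by $C/\sqrt n$ with $C$ independent of $n$, $m_t$, $z_t$, $\gamma_t$. *)

theory Defs
  imports "HOL-Probability.Probability"
begin

definition supnorm :: "('x::finite \<Rightarrow> real) \<Rightarrow> real" where
  "supnorm g = Max (range (\<lambda>x. \<bar>g x\<bar>))"

definition in_I :: "('x \<Rightarrow> real) \<Rightarrow> bool" where
  "in_I z \<longleftrightarrow> (\<forall>x. 0 \<le> z x \<and> z x \<le> 1)"

definition in_Delta :: "('x::finite \<Rightarrow> real) \<Rightarrow> bool" where
  "in_Delta z \<longleftrightarrow> (\<forall>x. 0 \<le> z x) \<and> (\<Sum>x\<in>UNIV. z x) = 1"

definition empirical :: "nat \<Rightarrow> (nat \<Rightarrow> 'x) \<Rightarrow> 'x \<Rightarrow> real" where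
  "empirical n xs = (\<lambda>x. real (card {i\<in>{..<n}. xs i = x}) / real n)"

definition trans_prob ::
  "('x \<Rightarrow> 'u \<Rightarrow> 'w::finite \<Rightarrow> ('x \<Rightarrow> real) \<Rightarrow> 'x) \<Rightarrow> 'w pmf
     \<Rightarrow> 'x \<Rightarrow> 'u \<Rightarrow> ('x \<Rightarrow> real) \<Rightarrow> 'x \<Rightarrow> real" where
  "trans_prob f pw x u z y = (\<Sum>w\<in>UNIV. (if f x u w z = y then 1 else 0) * pmf pw w)"

definition fhat ::
  "('x::finite \<Rightarrow> 'u \<Rightarrow> 'w::finite \<Rightarrow> ('x \<Rightarrow> real) \<Rightarrow> 'x) \<Rightarrow> 'w pmf
     \<Rightarrow> ('x \<Rightarrow> real) \<Rightarrow> ('x \<Rightarrow> 'u) \<Rightarrow> 'x \<Rightarrow> real" where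
  "fhat f pw z \<gamma> = (\<lambda>y. \<Sum>x\<in>UNIV. z x * trans_prob f pw x (\<gamma> x) z y)"

definition next_empirical ::
  "('x \<Rightarrow> 'u \<Rightarrow> 'w \<Rightarrow> ('x \<Rightarrow> real) \<Rightarrow> 'x) \<Rightarrow> nat \<Rightarrow> (nat \<Rightarrow> 'x) \<Rightarrow> ('x \<Rightarrow> 'u)
     \<Rightarrow> (nat \<Rightarrow> 'w) \<Rightarrow> 'x \<Rightarrow> real" where
  "next_empirical f n xs \<gamma> ws =
     empirical n (\<lambda>i. f (xs i) (\<gamma> (xs i)) (ws i) (empirical n xs))"

end

(*
  Split m_{t+1} - z_{t+1} at hat f(m_t, gamma_t). The second part is at most K3 ||m_t - z_t||
  by the Lipschitz property of hat f. For the first part, the noises of the n agents are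
  independent, so for each state y the quantity n (m_{t+1}(y) - hat f(m_t, gamma_t)(y)) is a
  sum of n independent centred variables bounded by 1. Its second moment is therefore at most n,
  so its expected absolute value is at most sqrt n; summing over y bounds the expected sup-norm
  of the first part by |X| / sqrt n.
*)

theory Submission
  imports Defs
begin

lemma (in prob_space) expectation_abs_le_sqrt_second_moment:
  fixes X :: "'a \<Rightarrow> real"
  assumes [measurable]: "X \<in> borel_measurable M" and sq: "integrable M (\<lambda>x. (X x)\<^sup>2)"
  shows "expectation (\<lambda>x. \<bar>X x\<bar>) \<le> sqrt (expectation (\<lambda>x. (X x)\<^sup>2))"
proof (rule real_le_rsqrt)
  have "integrable M X"
    by (rule square_integrable_imp_integrable) (use sq in simp_all)
  then have "variance (\<lambda>x. \<bar>X x\<bar>) = expectation (\<lambda>x. (X x)\<^sup>2) - (expectation (\<lambda>x. \<bar>X x\<bar>))\<^sup>2"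
    using variance_eq[of "\<lambda>x. \<bar>X x\<bar>"] sq by simp
  with variance_positive show "(expectation (\<lambda>x. \<bar>X x\<bar>))\<^sup>2 \<le> expectation (\<lambda>x. (X x)\<^sup>2)"
    by (metis diff_ge_0_iff_ge)
qed

lemma finite_set_Pi_pmf:
  assumes "finite A" "\<And>i. i \<in> A \<Longrightarrow> finite (set_pmf (p i))"
  shows "finite (set_pmf (Pi_pmf A d p))"
  using assms by (simp add: set_Pi_pmf finite_PiE_dflt)

lemma
  fixes g :: "'a \<Rightarrow> real" and p :: "'i \<Rightarrow> 'a pmf"
  assumes "finite A" "i \<in> A"
  shows expectation_Pi_pmf_component:
      "measure_pmf.expectation (Pi_pmf A d p) (\<lambda>ws. g (ws i)) = measure_pmf.expectation (p i) g"
    and integrable_Pi_pmf_component_iff: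
      "integrable (Pi_pmf A d p) (\<lambda>ws. g (ws i)) \<longleftrightarrow> integrable (p i) g"
proof -
  have component: "p i = map_pmf (\<lambda>ws. ws i) (Pi_pmf A d p)"
    using Pi_pmf_component[OF assms(1), of i d p] assms(2) by simp
  show "measure_pmf.expectation (Pi_pmf A d p) (\<lambda>ws. g (ws i)) = measure_pmf.expectation (p i) g"
    "integrable (Pi_pmf A d p) (\<lambda>ws. g (ws i)) \<longleftrightarrow> integrable (p i) g"
    by (simp_all add: component)
qed

lemma
  fixes Y :: "'i \<Rightarrow> 'a \<Rightarrow> real" and p :: "'i \<Rightarrow> 'a pmf"
  assumes A: "finite A" and J: "J \<subseteq> A" and int: "\<And>i. i \<in> J \<Longrightarrow> integrable (p i) (Y i)"
  shows expectation_Pi_pmf_prod_components: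
      "measure_pmf.expectation (Pi_pmf A d p) (\<lambda>ws. \<Prod>i\<in>J. Y i (ws i)) =
       (\<Prod>i\<in>J. measure_pmf.expectation (p i) (Y i))"
    and integrable_Pi_pmf_prod_components:
      "integrable (Pi_pmf A d p) (\<lambda>ws. \<Prod>i\<in>J. Y i (ws i))"
proof -
  have indep:
    "prob_space.indep_vars (measure_pmf (Pi_pmf A d p)) (\<lambda>_. borel) (\<lambda>i ws. Y i (ws i)) J"
    using prob_space.indep_vars_compose2[OF measure_pmf.prob_space_axioms
          prob_space.indep_vars_subset[OF measure_pmf.prob_space_axioms indep_vars_Pi_pmf[OF A] J],
          of Y "\<lambda>_. borel"]
    by simp
  have fin: "finite J"
    using A J by (rule finite_subset[rotated])
  have int_component: "integrable (Pi_pmf A d p) (\<lambda>ws. Y i (ws i))" if "i \<in> J" for i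
    using that J int by (simp add: integrable_Pi_pmf_component_iff[OF A] subsetD)
  have "measure_pmf.expectation (Pi_pmf A d p) (\<lambda>ws. \<Prod>i\<in>J. Y i (ws i)) =
      (\<Prod>i\<in>J. measure_pmf.expectation (Pi_pmf A d p) (\<lambda>ws. Y i (ws i)))"
    by (rule prob_space.indep_vars_lebesgue_integral[OF measure_pmf.prob_space_axioms
          fin indep int_component])
  also have "\<dots> = (\<Prod>i\<in>J. measure_pmf.expectation (p i) (Y i))"
    using J by (intro prod.cong refl expectation_Pi_pmf_component[OF A]) (rule subsetD)
  finally show "measure_pmf.expectation (Pi_pmf A d p) (\<lambda>ws. \<Prod>i\<in>J. Y i (ws i)) =
      (\<Prod>i\<in>J. measure_pmf.expectation (p i) (Y i))" .
  show "integrable (Pi_pmf A d p) (\<lambda>ws. \<Prod>i\<in>J. Y i (ws i))"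
    by (rule prob_space.indep_vars_integrable[OF measure_pmf.prob_space_axioms
          fin indep int_component])
qed

lemma
  fixes Y :: "'i \<Rightarrow> 'a \<Rightarrow> real" and p :: "'i \<Rightarrow> 'a pmf"
  assumes A: "finite A"
    and centered: "\<And>i. i \<in> A \<Longrightarrow> measure_pmf.expectation (p i) (Y i) = 0"
    and square_int: "\<And>i. i \<in> A \<Longrightarrow> integrable (p i) (\<lambda>w. (Y i w)\<^sup>2)"
  shows integrable_square_sum_Pi_pmf:
      "integrable (Pi_pmf A d p) (\<lambda>ws. (\<Sum>i\<in>A. Y i (ws i))\<^sup>2)"
    and expectation_square_sum_Pi_pmf:
      "measure_pmf.expectation (Pi_pmf A d p) (\<lambda>ws. (\<Sum>i\<in>A. Y i (ws i))\<^sup>2) =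
        (\<Sum>i\<in>A. measure_pmf.expectation (p i) (\<lambda>w. (Y i w)\<^sup>2))"
proof -
  let ?M = "Pi_pmf A d p"
  have cross: "integrable ?M (\<lambda>ws. Y i (ws i) * Y j (ws j)) \<and>
      measure_pmf.expectation ?M (\<lambda>ws. Y i (ws i) * Y j (ws j)) =
      (if i = j then measure_pmf.expectation (p i) (\<lambda>w. (Y i w)\<^sup>2) else 0)"
    if ij: "i \<in> A" "j \<in> A" for i j
  proof (cases "i = j")
    case True
    then show ?thesis
      using expectation_Pi_pmf_component[OF A ij(1), of d p "\<lambda>w. (Y i w)\<^sup>2"]
        integrable_Pi_pmf_component_iff[OF A ij(1), of d p "\<lambda>w. (Y i w)\<^sup>2"] square_int[OF ij(1)]
      by (simp add: power2_eq_square)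
  next
    case False
    have int: "integrable (p k) (Y k)" if "k \<in> {i, j}" for k
      by (rule measure_pmf.square_integrable_imp_integrable) (use square_int that ij in auto)
    have sub: "{i, j} \<subseteq> A"
      using ij by simp
    show ?thesis
      using expectation_Pi_pmf_prod_components[where p = p and Y = Y and d = d, OF A sub int]
        integrable_Pi_pmf_prod_components[where p = p and Y = Y and d = d, OF A sub int] ij False centered
      by simp
  qed
  show "integrable ?M (\<lambda>ws. (\<Sum>i\<in>A. Y i (ws i))\<^sup>2)"
    using cross by (simp add: power2_eq_square sum_product)
  have "measure_pmf.expectation ?M (\<lambda>ws. (\<Sum>i\<in>A. Y i (ws i))\<^sup>2) =
      (\<Sum>i\<in>A. \<Sum>j\<in>A. measure_pmf.expectation ?M (\<lambda>ws. Y i (ws i) * Y j (ws j)))"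
    using cross by (simp add: power2_eq_square sum_product)
  also have "\<dots> = (\<Sum>i\<in>A. measure_pmf.expectation (p i) (\<lambda>w. (Y i w)\<^sup>2))"
    using cross A by simp
  finally show "measure_pmf.expectation ?M (\<lambda>ws. (\<Sum>i\<in>A. Y i (ws i))\<^sup>2) =
      (\<Sum>i\<in>A. measure_pmf.expectation (p i) (\<lambda>w. (Y i w)\<^sup>2))" .
qed

lemma expectation_abs_sum_Pi_pmf_le:
  fixes Y :: "'i \<Rightarrow> 'a \<Rightarrow> real" and p :: "'i \<Rightarrow> 'a pmf"
  assumes A: "finite A"
    and centered: "\<And>i. i \<in> A \<Longrightarrow> measure_pmf.expectation (p i) (Y i) = 0"
    and square_int: "\<And>i. i \<in> A \<Longrightarrow> integrable (p i) (\<lambda>w. (Y i w)\<^sup>2)"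
    and second_moment: "\<And>i. i \<in> A \<Longrightarrow> measure_pmf.expectation (p i) (\<lambda>w. (Y i w)\<^sup>2) \<le> v"
  shows "measure_pmf.expectation (Pi_pmf A d p) (\<lambda>ws. \<bar>\<Sum>i\<in>A. Y i (ws i)\<bar>) \<le> sqrt (real (card A) * v)"
proof -
  have "measure_pmf.expectation (Pi_pmf A d p) (\<lambda>ws. \<bar>\<Sum>i\<in>A. Y i (ws i)\<bar>) \<le>
      sqrt (measure_pmf.expectation (Pi_pmf A d p) (\<lambda>ws. (\<Sum>i\<in>A. Y i (ws i))\<^sup>2))"
    by (rule measure_pmf.expectation_abs_le_sqrt_second_moment)
      (simp_all add: integrable_square_sum_Pi_pmf[OF A centered square_int])
  also have "\<dots> \<le> sqrt (real (card A) * v)"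
    using sum_mono[OF second_moment, of A]
    by (simp add: expectation_square_sum_Pi_pmf[OF A centered square_int])
  finally show ?thesis .
qed

lemma abs_le_supnorm: "\<bar>g x\<bar> \<le> supnorm g"
  unfolding supnorm_def by (rule Max_ge) auto

lemma supnorm_leI: "(\<And>x. \<bar>g x\<bar> \<le> c) \<Longrightarrow> supnorm g \<le> c"
  unfolding supnorm_def by (subst Max_le_iff) auto

lemma supnorm_le_sum_abs: "supnorm g \<le> (\<Sum>x\<in>UNIV. \<bar>g x\<bar>)"
  by (intro supnorm_leI member_le_sum) auto

lemma supnorm_diff_triangle: "supnorm (a - c) \<le> supnorm (a - b) + supnorm (b - c)"
proof (rule supnorm_leI)
  fix x
  have "\<bar>a x - c x\<bar> \<le> \<bar>a x - b x\<bar> + \<bar>b x - c x\<bar>"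
    by linarith
  also have "\<dots> \<le> supnorm (a - b) + supnorm (b - c)"
    using abs_le_supnorm[of "a - b" x] abs_le_supnorm[of "b - c" x] by simp
  finally show "\<bar>(a - c) x\<bar> \<le> supnorm (a - b) + supnorm (b - c)"
    by simp
qed

lemma in_Delta_imp_in_I: "in_Delta z \<Longrightarrow> in_I z"
  unfolding in_Delta_def in_I_def
  using member_le_sum[of _ UNIV z] by fastforce

lemma empirical_eq_average: "empirical n xs x = (\<Sum>i<n. of_bool (xs i = x)) / real n"
  unfolding empirical_def by (simp add: Int_def conj_commute)

lemma in_I_empirical: "in_I (empirical n xs)"
proof -
  have "card {i \<in> {..<n}. xs i = x} \<le> n" for x
    using card_mono[of "{..<n}" "{i \<in> {..<n}. xs i = x}"] by auto
  then show ?thesis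
    by (auto simp: in_I_def empirical_def divide_le_eq_1)
qed

lemma sum_empirical_mult:
  fixes xs :: "nat \<Rightarrow> 'x::finite" and h :: "'x \<Rightarrow> real"
  shows "(\<Sum>x\<in>UNIV. empirical n xs x * h x) = (\<Sum>i<n. h (xs i)) / real n"
proof -
  have "(\<Sum>x\<in>UNIV. (\<Sum>i<n. of_bool (xs i = x)) * h x) = (\<Sum>i<n. \<Sum>x\<in>UNIV. of_bool (xs i = x) * h x)"
    by (simp only: sum_distrib_right sum.swap[of _ UNIV])
  also have "\<dots> = (\<Sum>i<n. h (xs i))"
    by simp
  finally show ?thesis
    by (simp add: empirical_eq_average sum_divide_distrib[symmetric])
qed

lemma trans_prob_eq_expectation:
  "trans_prob f pw x u z y = measure_pmf.expectation pw (\<lambda>w. of_bool (f x u w z = y))"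
  unfolding trans_prob_def
  by (subst integral_measure_pmf_real[where A = UNIV]) (simp_all add: of_bool_def)

lemma trans_prob_nonneg: "0 \<le> trans_prob f pw x u z y"
  by (simp add: trans_prob_eq_expectation)

lemma trans_prob_le_1: "trans_prob f pw x u z y \<le> 1"
  unfolding trans_prob_eq_expectation
  by (rule measure_pmf.integral_le_const) (auto intro: integrable_measure_pmf_finite)

lemma next_empirical_minus_fhat_empirical:
  fixes f :: "'x::finite \<Rightarrow> 'u \<Rightarrow> 'w::finite \<Rightarrow> ('x \<Rightarrow> real) \<Rightarrow> 'x"
    and n :: nat and xs :: "nat \<Rightarrow> 'x"
  defines "m \<equiv> empirical n xs"
  shows "next_empirical f n xs \<gamma> ws y - fhat f pw m \<gamma> y =
    (\<Sum>i<n. of_bool (f (xs i) (\<gamma> (xs i)) (ws i) m = y) - trans_prob f pw (xs i) (\<gamma> (xs i)) m y) / real n"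
proof -
  have "next_empirical f n xs \<gamma> ws y = (\<Sum>i<n. of_bool (f (xs i) (\<gamma> (xs i)) (ws i) m = y)) / real n"
    by (simp only: next_empirical_def empirical_eq_average m_def)
  moreover have "fhat f pw m \<gamma> y = (\<Sum>i<n. trans_prob f pw (xs i) (\<gamma> (xs i)) m y) / real n"
    by (simp only: fhat_def m_def sum_empirical_mult)
  ultimately show ?thesis
    by (simp add: sum_subtractf diff_divide_distrib)
qed

lemma expectation_supnorm_next_empirical_deviation:
  fixes f :: "'x::finite \<Rightarrow> 'u \<Rightarrow> 'w::finite \<Rightarrow> ('x \<Rightarrow> real) \<Rightarrow> 'x"
  assumes n: "n > 0"
  shows "measure_pmf.expectation (Pi_pmf {..<n} d (\<lambda>_. pw))
      (\<lambda>ws. supnorm (next_empirical f n xs \<gamma> ws - fhat f pw (empirical n xs) \<gamma>))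
    \<le> real CARD('x) / sqrt (real n)"
proof -
  let ?M = "Pi_pmf {..<n} d (\<lambda>_. pw)"
  define m where "m = empirical n xs"
  define Y where
    "Y y i w = of_bool (f (xs i) (\<gamma> (xs i)) w m = y) - trans_prob f pw (xs i) (\<gamma> (xs i)) m y"
    for y i w
  have int: "integrable ?M g" for g :: "_ \<Rightarrow> real"
    by (intro integrable_measure_pmf_finite finite_set_Pi_pmf) auto
  have centered: "measure_pmf.expectation pw (Y y i) = 0" for y i
    unfolding Y_def trans_prob_eq_expectation by (simp add: integrable_measure_pmf_finite)
  have second_moment: "measure_pmf.expectation pw (\<lambda>w. (Y y i w)\<^sup>2) \<le> 1" for y i
  proof (rule measure_pmf.integral_le_const)
    show "integrable pw (\<lambda>w. (Y y i w)\<^sup>2)"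
      by (simp add: integrable_measure_pmf_finite)
    have "0 \<le> trans_prob f pw (xs i) (\<gamma> (xs i)) m y" "trans_prob f pw (xs i) (\<gamma> (xs i)) m y \<le> 1"
      by (rule trans_prob_nonneg trans_prob_le_1)+
    then have "\<bar>Y y i w\<bar> \<le> 1" for w
      by (simp add: Y_def of_bool_def)
    then show "AE w in pw. (Y y i w)\<^sup>2 \<le> 1"
      by (simp add: abs_square_le_1)
  qed
  have pointwise: "supnorm (next_empirical f n xs \<gamma> ws - fhat f pw m \<gamma>)
      \<le> (\<Sum>y\<in>UNIV. \<bar>\<Sum>i<n. Y y i (ws i)\<bar> / real n)" for ws
  proof -
    have "supnorm (next_empirical f n xs \<gamma> ws - fhat f pw m \<gamma>)
        \<le> (\<Sum>y\<in>UNIV. \<bar>next_empirical f n xs \<gamma> ws y - fhat f pw m \<gamma> y\<bar>)"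
      using supnorm_le_sum_abs[of "next_empirical f n xs \<gamma> ws - fhat f pw m \<gamma>"] by simp
    also have "\<dots> = (\<Sum>y\<in>UNIV. \<bar>\<Sum>i<n. Y y i (ws i)\<bar> / real n)"
      by (simp add: next_empirical_minus_fhat_empirical m_def Y_def)
    finally show ?thesis .
  qed
  have "measure_pmf.expectation ?M
      (\<lambda>ws. supnorm (next_empirical f n xs \<gamma> ws - fhat f pw m \<gamma>))
    \<le> measure_pmf.expectation ?M (\<lambda>ws. \<Sum>y\<in>UNIV. \<bar>\<Sum>i<n. Y y i (ws i)\<bar> / real n)"
    by (intro integral_mono int pointwise)
  also have "\<dots> = (\<Sum>y\<in>UNIV. measure_pmf.expectation ?M (\<lambda>ws. \<bar>\<Sum>i<n. Y y i (ws i)\<bar>) / real n)"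
    by (simp add: int)
  also have "\<dots> \<le> (\<Sum>y\<in>(UNIV :: 'x set). sqrt (real n) / real n)"
    using expectation_abs_sum_Pi_pmf_le[of "{..<n}" "\<lambda>_. pw", OF _ centered _ second_moment]
    by (intro sum_mono divide_right_mono) (simp_all add: integrable_measure_pmf_finite)
  also have "\<dots> = real CARD('x) / sqrt (real n)"
    using n by (simp add: field_simps flip: real_sqrt_mult)
  finally show ?thesis
    by (simp add: m_def)
qed

theorem lemma5:
  fixes f :: "'x::finite \<Rightarrow> 'u::finite \<Rightarrow> 'w::finite \<Rightarrow> ('x \<Rightarrow> real) \<Rightarrow> 'x"
    and cost :: "'x \<Rightarrow> 'u \<Rightarrow> ('x \<Rightarrow> real) \<Rightarrow> real"
    and pw :: "'w pmf"
    and K1 K2 K3 :: real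
  assumes cost_nonneg: "\<And>x u z. cost x u z \<ge> 0"
    and K1_pos: "K1 > 0" and K2_pos: "K2 > 0"
    and lip_P: "\<And>x y u z1 z2. in_I z1 \<Longrightarrow> in_I z2 \<Longrightarrow>
        \<bar>trans_prob f pw x u z1 y - trans_prob f pw x u z2 y\<bar> \<le> K1 * supnorm (z1 - z2)"
    and lip_l: "\<And>x u z1 z2. in_I z1 \<Longrightarrow> in_I z2 \<Longrightarrow>
        \<bar>cost x u z1 - cost x u z2\<bar> \<le> K2 * supnorm (z1 - z2)"
    and K3_pos: "K3 > 0"
    and lip_fhat: "\<And>\<gamma> z1 z2. in_I z1 \<Longrightarrow> in_I z2 \<Longrightarrow>
        supnorm (fhat f pw z1 \<gamma> - fhat f pw z2 \<gamma>) \<le> K3 * supnorm (z1 - z2)"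
  shows "\<exists>C. \<forall>n::nat. \<forall>xs :: nat \<Rightarrow> 'x. \<forall>\<gamma> :: 'x \<Rightarrow> 'u. \<forall>z :: 'x \<Rightarrow> real.
           n \<ge> 1 \<longrightarrow> in_Delta z \<longrightarrow>
           measure_pmf.expectation (Pi_pmf {..<n} undefined (\<lambda>_. pw))
             (\<lambda>ws. supnorm (next_empirical f n xs \<gamma> ws - fhat f pw z \<gamma>))
           \<le> K3 * supnorm (empirical n xs - z) + C / sqrt (real n)"
proof (intro exI[of _ "real CARD('x)"] allI impI)
  fix n :: nat and xs :: "nat \<Rightarrow> 'x" and \<gamma> :: "'x \<Rightarrow> 'u" and z :: "'x \<Rightarrow> real"
  assume n: "n \<ge> 1" and z: "in_Delta z"
  let ?M = "Pi_pmf {..<n} undefined (\<lambda>_. pw)"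
  let ?m = "empirical n xs"
  have int: "integrable ?M g" for g :: "_ \<Rightarrow> real"
    by (intro integrable_measure_pmf_finite finite_set_Pi_pmf) auto
  have "measure_pmf.expectation ?M (\<lambda>ws. supnorm (next_empirical f n xs \<gamma> ws - fhat f pw z \<gamma>))
      \<le> measure_pmf.expectation ?M (\<lambda>ws. supnorm (next_empirical f n xs \<gamma> ws - fhat f pw ?m \<gamma>)
            + supnorm (fhat f pw ?m \<gamma> - fhat f pw z \<gamma>))"
    by (intro integral_mono int supnorm_diff_triangle)
  also have "\<dots> = measure_pmf.expectation ?M (\<lambda>ws. supnorm (next_empirical f n xs \<gamma> ws - fhat f pw ?m \<gamma>))
      + supnorm (fhat f pw ?m \<gamma> - fhat f pw z \<gamma>)"
    by (simp add: int)
  also have "\<dots> \<le> real CARD('x) / sqrt (real n) + K3 * supnorm (?m - z)"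
    using n by (intro add_mono expectation_supnorm_next_empirical_deviation
        lip_fhat in_I_empirical in_Delta_imp_in_I z) simp
  finally show "measure_pmf.expectation ?M (\<lambda>ws. supnorm (next_empirical f n xs \<gamma> ws - fhat f pw z \<gamma>))
      \<le> K3 * supnorm (?m - z) + real CARD('x) / sqrt (real n)"
    by simp
qed

end
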